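(* In the RSP setting described in the context, for every $b\in\mathbb{N}^+$ with $b\le n$, the procedure $\textsc{LSBounds}(G,s,t,R,b)$ returns a pair $(L',U')$ with $L'\le C_{\mathrm{opt}}(G)\le U'$ and $U'/L'\in O(1+n/b)$, and it runs in time $O\big(f_G(n,m)\cdot(1+b+\log n)\big)$.
   Context: RSP setting: $G=(V,E,c,r)$ is a weakly connected directed graph with $n=|V|$, $m=|E|$ (so $m\ge n-1$), $c,r:E\to\mathbb{R}_{\ge0}$, vertices $s\ne t$, bound $R\ge 0$. Paths are edge sets; $P_v$ = set of paths from $s$ to $v$; $C_G(p)=\sum_{e\in p}c(e)$, $R_G(p)=\sum_{e\in p}r(e)$; $C_{\mathrm{opt}}(G)=\min\{C_G(p):p\in P_t,\ R_G(p)\le R\}$. It is assumed that a feasible path exists and $C_{\mathrm{opt}}(G)>0$. Arithmetic operations take $O(1)$ time. For $S>0$, $G^-_S=(V,E,c^-_S,r)$ with $c^-_S(e)=\lfloor c(e)/S\rfloor$. Bounds $L,U$: sort edges ascending by cost as $e_1,\dots,e_m$; $j^*$ is the smallest $j$ such that some $p\in P_t$ with $R_G(p)\le R$ uses only edges from $\{e_1,\dots,e_j\}$; $L=c(e_{j^*})$, $U=nL$. Scaling factors $S_i=2^{-i}U/(2n)$. Exact DP for integer costs $c':E\to\mathbb{N}_0$: $r_{v,j}=\min\{R(p): p\in P_v,\ C'(p)\le j\}$; row $j$ is computed by first setting $r'_{u,j}=\min_{e=(w,u),\,c'(e)>0}(r_{w,j-c'(e)}+r(e))$ in $O(m)$ time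 and then solving single-source shortest paths (weights $r$) from a new vertex $v_s$ in the graph $G^{(j)}$ consisting of the zero-cost edges of $G$, an edge $(v_s,s)$ of weight $0$ and edges $(v_s,u)$ of weight $r'_{u,j}$ for $u\ne s$. $f_G(n,m)$ denotes the time needed to compute one such row for any cost function $c':E\to\mathbb{N}_0$ (e.g. $f_G(n,m)=m+n\log n$ in general via Dijkstra with Fibonacci heaps). $\textsc{ExactRSP}(H,s,t,R,b)$ computes rows $j=0,1,\dots$ and returns $C_{\mathrm{opt}}(H)$ if it is $\le b$ and $\infty$ otherwise, in time $O(f_G(n,m)(1+\min\{b,C_{\mathrm{opt}}(H)\}))$. $\textsc{LSBounds}(G,s,t,R,b)$: for $i=0,1,2,\dots$, with $S=S_i$, if $\textsc{ExactRSP}(G^-_S,s,t,R,b)=\infty$ then return $(Sb,U)$ if $i=0$ and $(Sb,2S(b+n))$ otherwise. *)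

theory Defs
  imports Complex_Main
begin

text \<open>Graph representation: vertex set V and edge-identifier set E (both sets of naturals),
  each edge e has source src e and target trg e. Parallel edges are allowed.\<close>

definition weakly_connected :: "nat set \<Rightarrow> nat set \<Rightarrow> (nat \<Rightarrow> nat) \<Rightarrow> (nat \<Rightarrow> nat) \<Rightarrow> bool" where
  "weakly_connected V E src trg \<longleftrightarrow>
     (\<forall>u\<in>V. \<forall>v\<in>V. (u, v) \<in> ({(src e, trg e) | e. e \<in> E} \<union> {(trg e, src e) | e. e \<in> E})\<^sup>*)"

definition is_spath :: "nat set \<Rightarrow> (nat \<Rightarrow> nat) \<Rightarrow> (nat \<Rightarrow> nat) \<Rightarrow> nat \<Rightarrow> nat \<Rightarrow> nat list \<Rightarrow> bool" where
  "is_spath E src trg s v p \<longleftrightarrow>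
     set p \<subseteq> E \<and>
     (p = [] \<longrightarrow> v = s) \<and>
     (p \<noteq> [] \<longrightarrow> src (p ! 0) = s \<and> trg (last p) = v) \<and>
     (\<forall>i. Suc i < length p \<longrightarrow> trg (p ! i) = src (p ! Suc i)) \<and>
     distinct (s # map trg p)"

definition paths :: "nat set \<Rightarrow> (nat \<Rightarrow> nat) \<Rightarrow> (nat \<Rightarrow> nat) \<Rightarrow> nat \<Rightarrow> nat \<Rightarrow> nat set set" where
  "paths E src trg s v = {set p | p. is_spath E src trg s v p}"

definition copt :: "nat set \<Rightarrow> (nat \<Rightarrow> nat) \<Rightarrow> (nat \<Rightarrow> nat) \<Rightarrow> nat \<Rightarrow> nat \<Rightarrow> real
    \<Rightarrow> (nat \<Rightarrow> real) \<Rightarrow> (nat \<Rightarrow> real) \<Rightarrow> real" where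
  "copt E src trg s t R c r =
     Inf {sum c P | P. P \<in> paths E src trg s t \<and> sum r P \<le> R}"

definition floor_cost :: "real \<Rightarrow> (nat \<Rightarrow> real) \<Rightarrow> nat \<Rightarrow> real" where
  "floor_cost S c = (\<lambda>e. real_of_int \<lfloor>c e / S\<rfloor>)"

text \<open>Lower bound L, given a sorting es : {1..m} -> E of the edges ascending by cost.\<close>
definition jstar :: "nat set \<Rightarrow> (nat \<Rightarrow> nat) \<Rightarrow> (nat \<Rightarrow> nat) \<Rightarrow> nat \<Rightarrow> nat \<Rightarrow> real
    \<Rightarrow> (nat \<Rightarrow> real) \<Rightarrow> (nat \<Rightarrow> nat) \<Rightarrow> nat" where
  "jstar E src trg s t R r es =
     (LEAST j. \<exists>P\<in>paths E src trg s t. sum r P \<le> R \<and> P \<subseteq> es ` {1..j})"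

definition boundL :: "nat set \<Rightarrow> (nat \<Rightarrow> nat) \<Rightarrow> (nat \<Rightarrow> nat) \<Rightarrow> nat \<Rightarrow> nat \<Rightarrow> real
    \<Rightarrow> (nat \<Rightarrow> real) \<Rightarrow> (nat \<Rightarrow> real) \<Rightarrow> (nat \<Rightarrow> nat) \<Rightarrow> real" where
  "boundL E src trg s t R c r es = c (es (jstar E src trg s t R r es))"

definition boundU :: "nat set \<Rightarrow> nat set \<Rightarrow> (nat \<Rightarrow> nat) \<Rightarrow> (nat \<Rightarrow> nat) \<Rightarrow> nat \<Rightarrow> nat \<Rightarrow> real
    \<Rightarrow> (nat \<Rightarrow> real) \<Rightarrow> (nat \<Rightarrow> real) \<Rightarrow> (nat \<Rightarrow> nat) \<Rightarrow> real" where
  "boundU V E src trg s t R c r es = real (card V) * boundL E src trg s t R c r es"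

definition scaleS :: "nat set \<Rightarrow> nat set \<Rightarrow> (nat \<Rightarrow> nat) \<Rightarrow> (nat \<Rightarrow> nat) \<Rightarrow> nat \<Rightarrow> nat \<Rightarrow> real
    \<Rightarrow> (nat \<Rightarrow> real) \<Rightarrow> (nat \<Rightarrow> real) \<Rightarrow> (nat \<Rightarrow> nat) \<Rightarrow> nat \<Rightarrow> real" where
  "scaleS V E src trg s t R c r es i =
     boundU V E src trg s t R c r es / (2 * real (card V)) / 2 ^ i"

text \<open>C_opt of G^-_{S_i}; ExactRSP(G^-_{S_i}, s, t, R, b) returns infinity iff this exceeds b.\<close>
definition copt_i :: "nat set \<Rightarrow> nat set \<Rightarrow> (nat \<Rightarrow> nat) \<Rightarrow> (nat \<Rightarrow> nat) \<Rightarrow> nat \<Rightarrow> nat \<Rightarrow> real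
    \<Rightarrow> (nat \<Rightarrow> real) \<Rightarrow> (nat \<Rightarrow> real) \<Rightarrow> (nat \<Rightarrow> nat) \<Rightarrow> nat \<Rightarrow> real" where
  "copt_i V E src trg s t R c r es i =
     copt E src trg s t R (floor_cost (scaleS V E src trg s t R c r es i) c) r"

definition exact_fails :: "nat set \<Rightarrow> nat set \<Rightarrow> (nat \<Rightarrow> nat) \<Rightarrow> (nat \<Rightarrow> nat) \<Rightarrow> nat \<Rightarrow> nat \<Rightarrow> real
    \<Rightarrow> (nat \<Rightarrow> real) \<Rightarrow> (nat \<Rightarrow> real) \<Rightarrow> (nat \<Rightarrow> nat) \<Rightarrow> nat \<Rightarrow> nat \<Rightarrow> bool" where
  "exact_fails V E src trg s t R c r es b i \<longleftrightarrow> copt_i V E src trg s t R c r es i > real b"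

text \<open>Index of the iteration at which LSBounds returns.\<close>
definition ls_iter :: "nat set \<Rightarrow> nat set \<Rightarrow> (nat \<Rightarrow> nat) \<Rightarrow> (nat \<Rightarrow> nat) \<Rightarrow> nat \<Rightarrow> nat \<Rightarrow> real
    \<Rightarrow> (nat \<Rightarrow> real) \<Rightarrow> (nat \<Rightarrow> real) \<Rightarrow> (nat \<Rightarrow> nat) \<Rightarrow> nat \<Rightarrow> nat" where
  "ls_iter V E src trg s t R c r es b = (LEAST i. exact_fails V E src trg s t R c r es b i)"

definition lsbounds :: "nat set \<Rightarrow> nat set \<Rightarrow> (nat \<Rightarrow> nat) \<Rightarrow> (nat \<Rightarrow> nat) \<Rightarrow> nat \<Rightarrow> nat \<Rightarrow> real
    \<Rightarrow> (nat \<Rightarrow> real) \<Rightarrow> (nat \<Rightarrow> real) \<Rightarrow> (nat \<Rightarrow> nat) \<Rightarrow> nat \<Rightarrow> real \<times> real" where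
  "lsbounds V E src trg s t R c r es b =
     (let k = ls_iter V E src trg s t R c r es b;
          S = scaleS V E src trg s t R c r es k
      in (S * real b,
          if k = 0 then boundU V E src trg s t R c r es else 2 * S * (real b + real (card V))))"

text \<open>Running time of LSBounds, with f n m the time to compute one DP row:
  iteration i costs O(f(n,m)) for building G^-_{S_i} plus
  f(n,m) * (1 + min{b, C_opt(G^-_{S_i})}) for ExactRSP.\<close>
definition ls_time :: "(nat \<Rightarrow> nat \<Rightarrow> real) \<Rightarrow> nat set \<Rightarrow> nat set \<Rightarrow> (nat \<Rightarrow> nat) \<Rightarrow> (nat \<Rightarrow> nat)
    \<Rightarrow> nat \<Rightarrow> nat \<Rightarrow> real \<Rightarrow> (nat \<Rightarrow> real) \<Rightarrow> (nat \<Rightarrow> real) \<Rightarrow> (nat \<Rightarrow> nat) \<Rightarrow> nat \<Rightarrow> real" where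
  "ls_time f V E src trg s t R c r es b =
     (\<Sum>i\<le>ls_iter V E src trg s t R c r es b.
        f (card V) (card E) * (2 + min (real b) (copt_i V E src trg s t R c r es i)))"

end

theory Submission
  imports Defs
begin

text \<open>Every feasible path uses an edge of cost at least \<open>L\<close> and some feasible path uses only
  edges of cost at most \<open>L\<close>, so \<open>L \<le> C\<^sub>o\<^sub>p\<^sub>t \<le> (n - 1) L\<close>. Rounding with \<open>S\<^sub>i = L / 2\<^sup>i\<^sup>+\<^sup>1\<close> loses less
  than one unit per edge, so the rounded optimum \<open>C\<^sub>i\<close> lies between \<open>C\<^sub>o\<^sub>p\<^sub>t/S\<^sub>i - n\<close> and
  \<open>C\<^sub>o\<^sub>p\<^sub>t/S\<^sub>i\<close>. Hence the loop stops after at most \<open>log n + 1\<close> rounds, and at the stopping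
  index \<open>k\<close> we have \<open>b S\<^sub>k < C\<^sub>o\<^sub>p\<^sub>t \<le> (b + n) S\<^sub>k\<^sub>-\<^sub>1 = 2 (b + n) S\<^sub>k\<close>. Moreover
  \<open>C\<^sub>i \<le> C\<^sub>i\<^sub>+\<^sub>1 / 2\<close>, so the costs \<open>C\<^sub>i \<le> b\<close> of the unsuccessful rounds add up to at most \<open>2b\<close>,
  which bounds the running time.\<close>

lemma spath_card_less:
  assumes "is_spath E src trg s v p" "trg ` E \<subseteq> V" "s \<in> V" "finite V"
  shows "card (set p) < card V"
proof -
  have distinct: "distinct (s # map trg p)" and "set p \<subseteq> E"
    using assms(1) unfolding is_spath_def by auto
  then have "set (s # map trg p) \<subseteq> V" using assms(2,3) by auto
  then have "card (set (s # map trg p)) \<le> card V" using assms(4) card_mono by blast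
  moreover have "card (set (s # map trg p)) = length p + 1"
    using distinct distinct_card by fastforce
  ultimately show ?thesis using card_length[of p] by simp
qed

lemma paths_subset: "P \<in> paths E src trg s v \<Longrightarrow> P \<subseteq> E"
  unfolding paths_def is_spath_def by auto

lemma finite_paths: "finite E \<Longrightarrow> finite (paths E src trg s v)"
  using paths_subset by (metis Pow_iff finite_Pow_iff rev_finite_subset subsetI)

lemma paths_nonempty: "P \<in> paths E src trg s v \<Longrightarrow> s \<noteq> v \<Longrightarrow> P \<noteq> {}"
  unfolding paths_def is_spath_def by auto

lemma paths_card_less:
  assumes "P \<in> paths E src trg s v" "trg ` E \<subseteq> V" "s \<in> V" "finite V"
  shows "card P < card V"
proof -
  obtain p where "P = set p" "is_spath E src trg s v p"
    using assms(1) unfolding paths_def by auto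
  then show ?thesis using spath_card_less[OF _ assms(2-4)] by simp
qed

lemma copt_eq_Min:
  assumes "finite E" "\<exists>P\<in>paths E src trg s t. sum r P \<le> R"
  shows "copt E src trg s t R d r = Min (sum d ` {P \<in> paths E src trg s t. sum r P \<le> R})"
proof -
  have "{sum d P | P. P \<in> paths E src trg s t \<and> sum r P \<le> R}
      = sum d ` {P \<in> paths E src trg s t. sum r P \<le> R}" by blast
  moreover have "finite (sum d ` {P \<in> paths E src trg s t. sum r P \<le> R})"
    using finite_paths[OF assms(1)] by simp
  moreover have "sum d ` {P \<in> paths E src trg s t. sum r P \<le> R} \<noteq> {}"
    using assms(2) by auto
  ultimately show ?thesis unfolding copt_def by (simp add: cInf_eq_Min)
qed

lemma copt_le:
  assumes "finite E" "P \<in> paths E src trg s t" "sum r P \<le> R"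
  shows "copt E src trg s t R d r \<le> sum d P"
proof -
  have "finite {P \<in> paths E src trg s t. sum r P \<le> R}"
    using finite_paths[OF assms(1)] by simp
  moreover have "copt E src trg s t R d r = Min (sum d ` {P \<in> paths E src trg s t. sum r P \<le> R})"
    using copt_eq_Min assms by blast
  ultimately show ?thesis using assms(2,3) by (simp add: Min_le)
qed

lemma copt_attained:
  assumes "finite E" "\<exists>P\<in>paths E src trg s t. sum r P \<le> R"
  obtains Q where "Q \<in> paths E src trg s t" "sum r Q \<le> R" "copt E src trg s t R d r = sum d Q"
proof -
  have "finite {P \<in> paths E src trg s t. sum r P \<le> R}"
    using finite_paths[OF assms(1)] by simp
  then have "Min (sum d ` {P \<in> paths E src trg s t. sum r P \<le> R})
      \<in> sum d ` {P \<in> paths E src trg s t. sum r P \<le> R}"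
    using assms(2) by (intro Min_in) auto
  then show ?thesis using that copt_eq_Min[OF assms] by auto
qed

lemma floor_half_le: "real_of_int \<lfloor>(x::real) / 2\<rfloor> \<le> real_of_int \<lfloor>x\<rfloor> / 2"
proof -
  have "real_of_int (2 * \<lfloor>x / 2\<rfloor>) \<le> x" using of_int_floor_le[of "x / 2"] by simp
  then have "2 * \<lfloor>x / 2\<rfloor> \<le> \<lfloor>x\<rfloor>" by (simp add: le_floor_iff)
  then show ?thesis by linarith
qed

lemma floor_cost_double_le: "floor_cost (2 * S) c e \<le> floor_cost S c e / 2"
  using floor_half_le[of "c e / S"] unfolding floor_cost_def by (simp add: field_simps)

lemma sum_floor_cost_le:
  assumes "0 < S"
  shows "sum (floor_cost S c) P \<le> sum c P / S"
proof -
  have "sum (floor_cost S c) P \<le> sum (\<lambda>e. c e / S) P"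
    by (rule sum_mono) (simp add: floor_cost_def)
  then show ?thesis by (simp add: sum_divide_distrib)
qed

lemma sum_floor_cost_ge:
  assumes "0 < S"
  shows "sum c P / S - real (card P) \<le> sum (floor_cost S c) P"
proof -
  have "sum (\<lambda>e. c e / S - 1) P \<le> sum (floor_cost S c) P"
    by (rule sum_mono) (simp add: floor_cost_def less_imp_le)
  then show ?thesis by (simp add: sum_subtractf sum_divide_distrib)
qed

lemma sum_atMost_le_twice_last:
  fixes a :: "nat \<Rightarrow> real"
  assumes "\<And>i. a i \<le> a (Suc i) / 2" "0 \<le> a 0"
  shows "(\<Sum>i\<le>j. a i) \<le> 2 * a j"
proof (induction j)
  case 0
  then show ?case using assms(2) by simp
next
  case (Suc j)
  then show ?case using assms(1)[of j] by simp
qed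

locale rsp =
  fixes V E :: "nat set" and src trg :: "nat \<Rightarrow> nat" and c r :: "nat \<Rightarrow> real"
    and s t :: nat and R :: real and es :: "nat \<Rightarrow> nat" and b :: nat
  assumes finite_V: "finite V" and finite_E: "finite E"
    and trg_in_V: "trg ` E \<subseteq> V"
    and cost_nonneg: "\<forall>e\<in>E. 0 \<le> c e"
    and s_in_V: "s \<in> V" and s_ne_t: "s \<noteq> t"
    and feasible_exists: "\<exists>P\<in>paths E src trg s t. sum r P \<le> R"
    and opt_pos: "copt E src trg s t R c r > 0"
    and es_bij: "bij_betw es {1..card E} E"
    and es_sorted: "\<forall>i j. 1 \<le> i \<and> i \<le> j \<and> j \<le> card E \<longrightarrow> c (es i) \<le> c (es j)"
    and b_pos: "1 \<le> b" and b_le_n: "b \<le> card V"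
begin

abbreviation "opt d \<equiv> copt E src trg s t R d r"
abbreviation "L \<equiv> boundL E src trg s t R c r es"
abbreviation "jL \<equiv> jstar E src trg s t R r es"
abbreviation "S i \<equiv> scaleS V E src trg s t R c r es i"
abbreviation "rounded_opt i \<equiv> copt_i V E src trg s t R c r es i"
abbreviation "kstop \<equiv> ls_iter V E src trg s t R c r es b"

lemma opt_le: "P \<in> paths E src trg s t \<Longrightarrow> sum r P \<le> R \<Longrightarrow> opt d \<le> sum d P"
  using copt_le[OF finite_E] .

lemma opt_attained:
  obtains Q where "Q \<in> paths E src trg s t" "sum r Q \<le> R" "opt d = sum d Q"
  using copt_attained[OF finite_E feasible_exists] by blast

lemma card_V_pos: "0 < card V"
  using s_in_V finite_V card_gt_0_iff by blast

lemma card_path_less: "P \<in> paths E src trg s t \<Longrightarrow> card P < card V"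
  using paths_card_less trg_in_V s_in_V finite_V by blast

lemma es_image: "es ` {1..card E} = E"
  using es_bij bij_betw_imp_surj_on by blast

lemma jL_feasible: "\<exists>P\<in>paths E src trg s t. sum r P \<le> R \<and> P \<subseteq> es ` {1..jL}"
  and jL_le_card: "jL \<le> card E"
proof -
  have "\<exists>P\<in>paths E src trg s t. sum r P \<le> R \<and> P \<subseteq> es ` {1..card E}"
    using feasible_exists paths_subset es_image by blast
  then show "\<exists>P\<in>paths E src trg s t. sum r P \<le> R \<and> P \<subseteq> es ` {1..jL}"
    and "jL \<le> card E"
    unfolding jstar_def by (fact LeastI, fact Least_le)
qed

lemma jL_pos: "1 \<le> jL"
  using jL_feasible paths_nonempty s_ne_t by fastforce

lemma feasible_has_edge_ge_L:
  assumes "P \<in> paths E src trg s t" "sum r P \<le> R"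
  obtains e where "e \<in> P" "L \<le> c e"
proof (rule ccontr)
  assume "\<not> thesis"
  then have cheap: "\<forall>e\<in>P. c e < c (es jL)" using that unfolding boundL_def by force
  have "P \<subseteq> es ` {1..jL - 1}"
  proof
    fix e assume "e \<in> P"
    then have "e \<in> es ` {1..card E}" using paths_subset[OF assms(1)] es_image by blast
    then obtain i where i: "i \<in> {1..card E}" "es i = e" by blast
    have "i < jL"
    proof (rule ccontr)
      assume "\<not> i < jL"
      then have "c (es jL) \<le> c (es i)" using es_sorted jL_pos i(1) by auto
      then show False using cheap \<open>e \<in> P\<close> i(2) by force
    qed
    then show "e \<in> es ` {1..jL - 1}" using i by auto
  qed
  moreover have "\<not> (\<exists>P\<in>paths E src trg s t. sum r P \<le> R \<and> P \<subseteq> es ` {1..jL - 1})"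
    unfolding jstar_def by (rule not_less_Least) (use jL_pos in \<open>simp add: jstar_def\<close>)
  ultimately show False using assms by blast
qed

lemma L_le_cost:
  assumes "P \<in> paths E src trg s t" "sum r P \<le> R"
  shows "L \<le> sum c P"
proof -
  obtain e where "e \<in> P" "L \<le> c e" using feasible_has_edge_ge_L[OF assms] .
  moreover have "c e \<le> sum c P"
    using \<open>e \<in> P\<close> paths_subset[OF assms(1)] finite_E cost_nonneg
    by (intro member_le_sum) (auto intro: finite_subset)
  ultimately show ?thesis by simp
qed

lemma L_nonneg: "0 \<le> L"
proof -
  have "es jL \<in> E" using jL_pos jL_le_card es_bij bij_betwE by fastforce
  then show ?thesis using cost_nonneg unfolding boundL_def by auto
qed

lemma opt_le_L: "opt c \<le> (real (card V) - 1) * L"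
proof -
  obtain P where P: "P \<in> paths E src trg s t" "sum r P \<le> R" "P \<subseteq> es ` {1..jL}"
    using jL_feasible by auto
  have "sum c P \<le> sum (\<lambda>_. L) P"
  proof (rule sum_mono)
    fix e assume "e \<in> P"
    then obtain i where "i \<in> {1..jL}" "es i = e" using P(3) by auto
    then show "c e \<le> L" using es_sorted jL_le_card unfolding boundL_def by auto
  qed
  also have "\<dots> \<le> (real (card V) - 1) * L"
    using card_path_less[OF P(1)] L_nonneg by (simp add: mult_right_mono)
  finally show ?thesis using opt_le[OF P(1,2), of c] by linarith
qed

lemma L_pos: "0 < L"
proof (rule ccontr)
  assume "\<not> 0 < L"
  then have "L = 0" using L_nonneg by simp
  then show False using opt_le_L opt_pos by simp
qed

lemma S_eq: "S i = L / 2 ^ Suc i"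
  using card_V_pos
  unfolding scaleS_def boundU_def by (fastforce simp: field_simps)

lemma S_pos: "0 < S i"
  using S_eq L_pos by simp

lemma rounded_opt_eq: "rounded_opt i = opt (floor_cost (S i) c)"
  unfolding copt_i_def ..

lemma rounded_opt_ge: "2 ^ Suc i - (real (card V) - 1) \<le> rounded_opt i"
proof -
  obtain Q where Q: "Q \<in> paths E src trg s t" "sum r Q \<le> R"
      "rounded_opt i = sum (floor_cost (S i) c) Q"
    using opt_attained rounded_opt_eq by metis
  have "2 ^ Suc i = L / S i" using S_eq L_pos by simp
  also have "\<dots> \<le> sum c Q / S i"
    using divide_right_mono[OF L_le_cost[OF Q(1,2)] less_imp_le[OF S_pos]] .
  also have "\<dots> \<le> rounded_opt i + real (card Q)"
    using sum_floor_cost_ge[OF S_pos] Q(3) by (simp add: algebra_simps)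
  finally show ?thesis using card_path_less[OF Q(1)] by linarith
qed

lemma rounded_opt_nonneg: "0 \<le> rounded_opt i"
proof -
  obtain Q where Q: "Q \<in> paths E src trg s t" "rounded_opt i = sum (floor_cost (S i) c) Q"
    using opt_attained rounded_opt_eq by metis
  have "0 \<le> floor_cost (S i) c e" if "e \<in> Q" for e
    using that paths_subset[OF Q(1)] cost_nonneg S_pos[of i] unfolding floor_cost_def by auto
  then show ?thesis using Q(2) by (simp add: sum_nonneg)
qed

lemma rounded_opt_le_half_next: "rounded_opt i \<le> rounded_opt (Suc i) / 2"
proof -
  obtain Q where Q: "Q \<in> paths E src trg s t" "sum r Q \<le> R"
      "rounded_opt (Suc i) = sum (floor_cost (S (Suc i)) c) Q"
    using opt_attained rounded_opt_eq by metis
  have "S i = 2 * S (Suc i)" using S_eq by simp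
  then have "rounded_opt i \<le> sum (floor_cost (2 * S (Suc i)) c) Q"
    using opt_le[OF Q(1,2)] rounded_opt_eq by simp
  also have "\<dots> \<le> sum (\<lambda>e. floor_cost (S (Suc i)) c e / 2) Q"
    by (intro sum_mono floor_cost_double_le)
  also have "\<dots> = rounded_opt (Suc i) / 2"
    unfolding Q(3) sum_divide_distrib ..
  finally show ?thesis .
qed

lemma exact_fails_iff: "exact_fails V E src trg s t R c r es b i \<longleftrightarrow> real b < rounded_opt i"
  unfolding exact_fails_def ..

lemma exact_fails_if_card_le:
  assumes "card V \<le> 2 ^ i"
  shows "exact_fails V E src trg s t R c r es b i"
proof -
  have "real (card V) \<le> 2 ^ i" using assms by (metis of_nat_le_iff of_nat_numeral of_nat_power)
  moreover have "real b \<le> real (card V)" using b_le_n by simp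
  ultimately have "real b < 2 ^ Suc i - (real (card V) - 1)"
    unfolding power_Suc by linarith
  then show ?thesis using rounded_opt_ge[of i] exact_fails_iff by simp
qed

lemma exists_exact_fails: "\<exists>i. exact_fails V E src trg s t R c r es b i"
  using exact_fails_if_card_le[OF less_imp_le[OF less_exp]] ..

lemma kstop_fails: "real b < rounded_opt kstop"
  using LeastI_ex[OF exists_exact_fails] unfolding exact_fails_iff ls_iter_def .

lemma before_kstop_succeeds: "i < kstop \<Longrightarrow> rounded_opt i \<le> real b"
  using not_less_Least[of i "exact_fails V E src trg s t R c r es b"]
  unfolding exact_fails_iff ls_iter_def by simp

lemma kstop_le_log: "real kstop \<le> log 2 (real (card V)) + 1"
proof (cases kstop)
  case 0
  then show ?thesis using card_V_pos by simp
next
  case (Suc k)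
  then have "\<not> card V \<le> 2 ^ k"
    using before_kstop_succeeds[of k] exact_fails_if_card_le exact_fails_iff by force
  then have "real (2 ^ k) < real (card V)" by linarith
  then have "log 2 (real (2 ^ k)) < log 2 (real (card V))" by (subst log_less_cancel_iff) auto
  then have "real k < log 2 (real (card V))" by (simp add: log_nat_power)
  then show ?thesis using Suc by simp
qed

lemma lsbounds_eq: "lsbounds V E src trg s t R c r es b =
    (S kstop * real b,
     if kstop = 0 then real (card V) * L else 2 * S kstop * (real b + real (card V)))"
  unfolding lsbounds_def Let_def boundU_def by simp

lemma lower_bound: "S kstop * real b \<le> opt c"
proof -
  obtain Q where Q: "Q \<in> paths E src trg s t" "sum r Q \<le> R" "opt c = sum c Q"
    using opt_attained by metis
  have "real b < rounded_opt kstop" by (fact kstop_fails)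
  also have "\<dots> \<le> sum (floor_cost (S kstop) c) Q" using opt_le[OF Q(1,2)] rounded_opt_eq by simp
  also have "\<dots> \<le> sum c Q / S kstop" using sum_floor_cost_le[OF S_pos] .
  finally show ?thesis using Q(3) S_pos[of kstop] by (simp add: pos_less_divide_eq mult.commute)
qed

lemma upper_bound:
  "opt c \<le> (if kstop = 0 then real (card V) * L else 2 * S kstop * (real b + real (card V)))"
proof (cases kstop)
  case 0
  then show ?thesis using opt_le_L L_pos by (simp add: algebra_simps)
next
  case (Suc k)
  obtain Q where Q: "Q \<in> paths E src trg s t" "sum r Q \<le> R"
      "rounded_opt k = sum (floor_cost (S k) c) Q"
    using opt_attained rounded_opt_eq by metis
  have "sum c Q / S k \<le> rounded_opt k + real (card Q)"
    using sum_floor_cost_ge[OF S_pos] Q(3) by (simp add: algebra_simps)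
  also have "\<dots> \<le> real b + real (card V)"
    using before_kstop_succeeds[of k] Suc card_path_less[OF Q(1)] by simp
  finally have "sum c Q \<le> S k * (real b + real (card V))"
    using S_pos[of k] by (simp add: pos_divide_le_eq mult.commute)
  moreover have "S k = 2 * S kstop" using Suc S_eq by simp
  ultimately show ?thesis using Suc opt_le[OF Q(1,2), of c] by simp
qed

lemma ratio_bound:
  "(if kstop = 0 then real (card V) * L else 2 * S kstop * (real b + real (card V)))
     / (S kstop * real b) \<le> 2 * (1 + real (card V) / real b)"
proof (cases "kstop = 0")
  case True
  then have "real (card V) * L / (S kstop * real b) = 2 * (real (card V) / real b)"
    using S_eq[of 0] L_pos b_pos by (simp add: field_simps)
  then show ?thesis using True by simp
next
  case False
  have "2 * S kstop * (real b + real (card V)) / (S kstop * real b) = 2 * (1 + real (card V) / real b)"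
    using S_pos[of kstop] b_pos by (simp add: field_simps)
  then show ?thesis using False by simp
qed

lemma lsbounds_correct:
  "let LU = lsbounds V E src trg s t R c r es b in
     fst LU \<le> opt c \<and> opt c \<le> snd LU \<and> snd LU / fst LU \<le> 2 * (1 + real (card V) / real b)"
  using lower_bound upper_bound ratio_bound unfolding lsbounds_eq Let_def by simp

lemma sum_min_rounded_opt_le: "(\<Sum>i\<le>kstop. min (real b) (rounded_opt i)) \<le> 3 * real b"
proof (cases kstop)
  case 0
  then show ?thesis by simp
next
  case (Suc k)
  have "(\<Sum>i\<le>k. min (real b) (rounded_opt i)) \<le> (\<Sum>i\<le>k. rounded_opt i)"
    by (rule sum_mono) simp
  also have "\<dots> \<le> 2 * rounded_opt k"
    using sum_atMost_le_twice_last rounded_opt_le_half_next rounded_opt_nonneg by blast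
  also have "\<dots> \<le> 2 * real b" using before_kstop_succeeds Suc by simp
  finally show ?thesis using Suc by simp
qed

lemma ls_time_le:
  assumes "0 < f (card V) (card E)"
  shows "ls_time f V E src trg s t R c r es b
     \<le> 4 * f (card V) (card E) * (1 + real b + log 2 (real (card V)))"
proof -
  have "(\<Sum>i\<le>kstop. 2 + min (real b) (rounded_opt i))
      = 2 * (real kstop + 1) + (\<Sum>i\<le>kstop. min (real b) (rounded_opt i))"
    by (simp add: sum.distrib)
  also have "\<dots> \<le> 4 * (1 + real b + log 2 (real (card V)))"
  proof -
    have "0 \<le> log 2 (real (card V))" using card_V_pos by simp
    then show ?thesis using kstop_le_log sum_min_rounded_opt_le by (simp add: algebra_simps)
  qed
  finally show ?thesis
    using assms unfolding ls_time_def by (simp add: sum_distrib_left[symmetric] mult_left_mono)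
qed

end

theorem theorem2:
  "\<exists>C1 C2. 0 < C1 \<and> 0 < C2 \<and>
    (\<forall>(V::nat set) (E::nat set) (src::nat \<Rightarrow> nat) (trg::nat \<Rightarrow> nat)
       (c::nat \<Rightarrow> real) (r::nat \<Rightarrow> real) (s::nat) (t::nat) (R::real)
       (es::nat \<Rightarrow> nat) (b::nat) (f::nat \<Rightarrow> nat \<Rightarrow> real).
      finite V \<and> finite E \<and>
      (\<forall>e\<in>E. src e \<in> V \<and> trg e \<in> V) \<and>
      weakly_connected V E src trg \<and>
      (\<forall>e\<in>E. 0 \<le> c e \<and> 0 \<le> r e) \<and>
      s \<in> V \<and> t \<in> V \<and> s \<noteq> t \<and> 0 \<le> R \<and>
      (\<exists>P\<in>paths E src trg s t. sum r P \<le> R) \<and>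
      copt E src trg s t R c r > 0 \<and>
      bij_betw es {1..card E} E \<and>
      (\<forall>i j. 1 \<le> i \<and> i \<le> j \<and> j \<le> card E \<longrightarrow> c (es i) \<le> c (es j)) \<and>
      1 \<le> b \<and> b \<le> card V \<and>
      0 < f (card V) (card E)
      \<longrightarrow>
      (\<exists>i. exact_fails V E src trg s t R c r es b i) \<and>
      (let LU = lsbounds V E src trg s t R c r es b in
        fst LU \<le> copt E src trg s t R c r \<and>
        copt E src trg s t R c r \<le> snd LU \<and>
        snd LU / fst LU \<le> C1 * (1 + real (card V) / real b)) \<and>
      ls_time f V E src trg s t R c r es b
        \<le> C2 * f (card V) (card E) * (1 + real b + log 2 (real (card V))))"
proof (rule exI[of _ 2], rule exI[of _ 4], simp only: zero_less_numeral simp_thms,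
    intro allI impI, goal_cases)
  case (1 V E src trg c r s t R es b f)
  then interpret rsp V E src trg c r s t R es b
    by unfold_locales auto
  show ?case
    using exists_exact_fails lsbounds_correct ls_time_le 1 by blast
qed

end
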